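(* Let $T$ be a finite triangulation of a $d$-dimensional manifold $N$, equipped with a branching structure. Let $T^k$ denote its set of $k$-simplices, and let $\tilde a\in C^0(N,\mathbb{Z}_2)$. Then, modulo 2, $$\sum_{k=0}^{d}\ \sum_{\langle v_0\cdots v_k\rangle\in T^k}\tilde a(v_0)\tilde a(v_1)\cdots\tilde a(v_k)\ \equiv\ \sum_{j=0}^{d} w_{d-j}\big(\tilde a\cup\underbrace{\delta\tilde a\cup\cdots\cup\delta\tilde a}_{j\text{ times}}\big),$$ where $w_{d-j}\in C_j(N,\mathbb{Z}_2)$ are the chains defined in the context, and $w(\phi)$ denotes the chain–cochain pairing.
   Context: Simplices are written $\langle v_0\cdots v_q\rangle$ with vertices in the order given by the branching structure. The cup product of $\mathbb{Z}_2$-cochains is $$(\alpha\cup\beta)(v_0\cdots v_{p+q})=\alpha(v_0\cdots v_p)\beta(v_p\cdots v_{p+q}),$$ and $(\delta\tilde a)(v_0v_1)=\tilde a(v_0)+\tilde a(v_1)$. For a $q$-simplex $t=\langle 0\,1\cdots q\rangle$ (vertices labelled in branching order) define chains $\partial_p(t)\in C_p(N,\mathbb{Z}_2)$ as follows. - If $p=2k$ is even, $\partial_p(t)=\sum\langle 0,i_1,i_1{+}1,i_2,i_2{+}1,\dots,i_k,i_k{+}1\rangle$, summed over integers with $1\le i_1$, $i_{r+1}\ge i_r+2$ and $i_k\le q-1$. - If $p=2k+1$ is odd, $\partial_p(t)=\sum\langle 0,i_1,i_1{+}1,\dots,i_k,i_k{+}1,q\rangle$, summed over integers with $1\le i_1$,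 $i_{r+1}\ge i_r+2$ and $i_k\le q-2$. In particular $\partial_0(t)=\langle0\rangle$ and $\partial_1(t)=\langle0q\rangle$ for $q\ge1$. Then $$w_{d-p}=\sum_{q\ge p}\ \sum_{t\in T^q}\partial_p(t)\in C_p(N,\mathbb{Z}_2).$$ In particular $w_0$ is the sum of all $d$-simplices. *)

theory Defs
  imports Main "HOL-Library.Z2"
begin

text \<open>A simplex is represented
  by the list of its vertices in branching order; faces are (nonempty) subsequences.
  Requiring the complex to be closed under taking subsequences and that each vertex
  set occurs with only one ordering is exactly a branching structure (a local
  ordering of the vertices of every simplex compatible with passing to faces).\<close>

definition branched_complex :: "'v list set \<Rightarrow> bool" where
  "branched_complex K \<longleftrightarrow> finite K
     \<and> (\<forall>s\<in>K. s \<noteq> [] \<and> distinct s)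
     \<and> (\<forall>s\<in>K. \<forall>I. nths s I \<noteq> [] \<longrightarrow> nths s I \<in> K)
     \<and> (\<forall>s\<in>K. \<forall>t\<in>K. set s = set t \<longrightarrow> s = t)"

definition simplices :: "'v list set \<Rightarrow> nat \<Rightarrow> 'v list set" where
  "simplices K k = {s \<in> K. length s = Suc k}"

definition cup :: "nat \<Rightarrow> ('v list \<Rightarrow> bit) \<Rightarrow> ('v list \<Rightarrow> bit) \<Rightarrow> 'v list \<Rightarrow> bit" where
  "cup p \<alpha> \<beta> s = \<alpha> (take (Suc p) s) * \<beta> (drop p s)"

definition cochain0 :: "('v \<Rightarrow> bit) \<Rightarrow> 'v list \<Rightarrow> bit" where
  "cochain0 a s = a (s ! 0)"

definition delta0 :: "('v \<Rightarrow> bit) \<Rightarrow> 'v list \<Rightarrow> bit" where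
  "delta0 a s = a (s ! 0) + a (s ! 1)"

fun a_cup_delta :: "('v \<Rightarrow> bit) \<Rightarrow> nat \<Rightarrow> 'v list \<Rightarrow> bit" where
  "a_cup_delta a 0 = cochain0 a"
| "a_cup_delta a (Suc j) = cup j (a_cup_delta a j) (delta0 a)"

text \<open>Index sets for the chains \<partial>_p(t) of a q-simplex t = <0 1 ... q>.\<close>
definition idx_set :: "nat \<Rightarrow> nat \<Rightarrow> nat list set" where
  "idx_set p q = {is. length is = p div 2 \<and> sorted_wrt (\<lambda>x y. x + 2 \<le> y) is
       \<and> (\<forall>i\<in>set is. 1 \<le> i \<and> (if even p then i + 1 \<le> q else i + 2 \<le> q))}"

definition idx_vertices :: "nat \<Rightarrow> nat \<Rightarrow> nat list \<Rightarrow> nat list" where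
  "idx_vertices p q is = 0 # concat (map (\<lambda>i. [i, Suc i]) is) @ (if even p then [] else [q])"

text \<open>The p-chain \<partial>_p(t) (as a Z_2 coefficient function on simplices), for a simplex t
  given by its ordered vertex list (so q = length t - 1).\<close>
definition d_chain :: "nat \<Rightarrow> 'v list \<Rightarrow> 'v list \<Rightarrow> bit" where
  "d_chain p t \<sigma> = (\<Sum>is\<in>idx_set p (length t - 1).
       if map (\<lambda>j. t ! j) (idx_vertices p (length t - 1) is) = \<sigma> then 1 else 0)"

text \<open>\<open>w_chain K j\<close> is the j-chain w_{d-j} = \<Sum>_{q\<ge>j} \<Sum>_{t\<in>T^q} \<partial>_j(t).\<close>
definition w_chain :: "'v list set \<Rightarrow> nat \<Rightarrow> 'v list \<Rightarrow> bit" where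
  "w_chain K j \<sigma> = (\<Sum>t\<in>{t\<in>K. j < length t}. d_chain j t \<sigma>)"

definition pairing :: "'v list set \<Rightarrow> nat \<Rightarrow> ('v list \<Rightarrow> bit) \<Rightarrow> ('v list \<Rightarrow> bit) \<Rightarrow> bit" where
  "pairing K j c \<phi> = (\<Sum>\<sigma>\<in>simplices K j. c \<sigma> * \<phi> \<sigma>)"

end

theory Submission
  imports Defs
begin

(* Fix a simplex t = <v_0 ... v_q> and write x_i = a(v_i).  On the face <0, i_1, i_1+1, ...>
   the cochain a \<union> \<delta>a \<union> ... \<union> \<delta>a telescopes to x_0 times the product of the "ascents"
   (1 + x_i) x_(i+1) at i = i_1, i_2, ..., times 1 + x_q in odd degree.  Two adjacent ascents
   never occur together, so summing over all admissible index lists gives x_0 N_q in even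
   degree and x_0 (1 + x_q) N_(q-1) in odd degree, where N_q = \<Prod>_(1\<le>i<q) (1 + ascent_i) is
   the indicator that x_1 ... x_q has no ascent, i.e. has the form 1...10...0.  Then
   N_q + (1 + x_q) N_(q-1) = x_q N_q = x_1 ... x_q, so each simplex contributes exactly the
   product of a over its vertices, which is the left-hand side. *)

(* Reason in the ring bit instead of letting simp turn + and * into boolean connectives. *)
declare add_bit_eq_xor [simp del] mult_bit_eq_and [simp del]

lemma nths_eq_map_nth_filter: "nths xs A = map ((!) xs) (filter (\<lambda>i. i \<in> A) [0..<length xs])"
proof (induction xs rule: rev_induct)
  case (snoc x xs)
  then show ?case by (auto simp: nths_append nth_append intro!: map_cong)
qed simp

lemma nths_eq_map_nth:
  assumes "sorted_wrt (<) vs" and "\<forall>v\<in>set vs. v < length xs"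
  shows "nths xs (set vs) = map ((!) xs) vs"
proof -
  have "filter (\<lambda>i. i \<in> set vs) [0..<length xs] = vs"
    using assms
    by (intro sorted_distinct_set_unique) (auto simp: strict_sorted_iff sorted_wrt_filter)
  then show ?thesis by (simp add: nths_eq_map_nth_filter)
qed

lemma sum_lessThan_even_odd:
  fixes f :: "nat \<Rightarrow> 'a::comm_monoid_add"
  shows "(\<Sum>j<n. f j) = (\<Sum>k<(n + 1) div 2. f (2 * k)) + (\<Sum>k<n div 2. f (2 * k + 1))"
proof (induction n)
  case (Suc n)
  then show ?case
    by (cases "even n") (auto elim!: evenE oddE simp: ac_simps)
qed simp

definition gapped_lists :: "nat \<Rightarrow> nat list set" where
  "gapped_lists q = {is. sorted_wrt (\<lambda>i j. i + 2 \<le> j) is \<and> (\<forall>i\<in>set is. 1 \<le> i \<and> i + 1 \<le> q)}"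

lemma length_gapped_le:
  assumes "sorted_wrt (\<lambda>i j. i + 2 \<le> j) is" and "\<forall>i\<in>set is. lo \<le> i \<and> i + 1 \<le> hi"
  shows "2 * length is \<le> hi + 1 - lo"
  using assms
proof (induction "is" arbitrary: lo)
  case (Cons i "is")
  have "2 * length is \<le> hi + 1 - (i + 2)"
    using Cons.prems by (intro Cons.IH) auto
  with Cons.prems show ?case by auto
qed simp

lemma length_gapped_lists: "is \<in> gapped_lists q \<Longrightarrow> 2 * length is \<le> q"
  unfolding gapped_lists_def using length_gapped_le[of "is" 1 q] by auto

lemma finite_gapped_lists: "finite (gapped_lists q)"
proof (rule finite_subset)
  show "gapped_lists q \<subseteq> {is. set is \<subseteq> {1..q} \<and> length is \<le> q}"
    using length_gapped_lists by (fastforce simp: gapped_lists_def)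
qed (rule finite_lists_length_le, simp)

lemma gapped_lists_le_1:
  assumes "q \<le> 1"
  shows "gapped_lists q = {[]}"
proof -
  have "is = []" if "is \<in> gapped_lists q" for "is"
    using length_gapped_lists[OF that] assms by (cases "is") auto
  then show ?thesis by (auto simp: gapped_lists_def)
qed

lemma gapped_lists_Suc_Suc:
  "gapped_lists (Suc (Suc q)) = gapped_lists (Suc q) \<union> (\<lambda>is. is @ [Suc q]) ` gapped_lists q"
proof (intro equalityI subsetI)
  fix "is" assume "is": "is \<in> gapped_lists (Suc (Suc q))"
  show "is \<in> gapped_lists (Suc q) \<union> (\<lambda>is. is @ [Suc q]) ` gapped_lists q"
  proof (cases "Suc q \<in> set is")
    case True
    then obtain ys zs where split: "is = ys @ Suc q # zs" by (meson split_list)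
    with "is" have "zs = []" by (cases zs) (auto simp: gapped_lists_def sorted_wrt_append)
    with "is" split have "ys \<in> gapped_lists q" by (fastforce simp: gapped_lists_def sorted_wrt_append)
    with split \<open>zs = []\<close> show ?thesis by blast
  next
    case False
    with "is" have "is \<in> gapped_lists (Suc q)" by (auto simp: gapped_lists_def le_Suc_eq)
    then show ?thesis by blast
  qed
qed (fastforce simp: gapped_lists_def sorted_wrt_append)+

definition ascent :: "(nat \<Rightarrow> bit) \<Rightarrow> nat \<Rightarrow> bit" where
  "ascent x i = (1 + x i) * x (Suc i)"

definition no_ascent :: "(nat \<Rightarrow> bit) \<Rightarrow> nat \<Rightarrow> bit" where
  "no_ascent x q = (\<Prod>i\<in>{1..<q}. 1 + ascent x i)"

lemma ascent_mult_ascent_Suc: "ascent x i * ascent x (Suc i) = 0"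
  by (cases "x (Suc i)") (simp_all add: ascent_def)

lemma no_ascent_Suc: "1 \<le> q \<Longrightarrow> no_ascent x (Suc q) = no_ascent x q * (1 + ascent x q)"
  by (simp add: no_ascent_def prod.atLeastLessThan_Suc)

lemma sum_gapped_lists_Suc_Suc:
  "(\<Sum>is\<in>gapped_lists (Suc (Suc q)). \<Prod>i\<leftarrow>is. ascent x i)
   = (\<Sum>is\<in>gapped_lists (Suc q). \<Prod>i\<leftarrow>is. ascent x i)
     + (\<Sum>is\<in>gapped_lists q. \<Prod>i\<leftarrow>is. ascent x i) * ascent x (Suc q)"
proof -
  have "inj_on (\<lambda>is. is @ [Suc q]) (gapped_lists q)" by (auto intro: inj_onI)
  moreover have "gapped_lists (Suc q) \<inter> (\<lambda>is. is @ [Suc q]) ` gapped_lists q = {}"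
    by (auto simp: gapped_lists_def)
  ultimately show ?thesis
    unfolding gapped_lists_Suc_Suc sum_distrib_right
    by (simp only: sum.union_disjoint finite_gapped_lists finite_imageI sum.reindex
        o_def map_append prod_list.append) simp
qed

(* Adjacent ascents cannot occur together, so the gap condition is immaterial and
   the sum over gapped lists is the expanded product over all index sets. *)
lemma sum_gapped_lists_eq_no_ascent:
  "(\<Sum>is\<in>gapped_lists q. \<Prod>i\<leftarrow>is. ascent x i) = no_ascent x q"
proof (induction q rule: induct_nat_012)
  case (ge2 q)
  have shift: "no_ascent x (Suc q) * ascent x (Suc q) = no_ascent x q * ascent x (Suc q)"
    using ascent_mult_ascent_Suc[of x q]
    by (cases "q = 0") (simp_all add: no_ascent_def no_ascent_Suc ring_distribs mult.assoc)
  have "(\<Sum>is\<in>gapped_lists (Suc (Suc q)). \<Prod>i\<leftarrow>is. ascent x i)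
      = no_ascent x (Suc q) + no_ascent x q * ascent x (Suc q)"
    by (simp only: sum_gapped_lists_Suc_Suc ge2.IH)
  also have "\<dots> = no_ascent x (Suc q) * (1 + ascent x (Suc q))"
    by (simp only: shift[symmetric] ring_distribs mult_1_right)
  finally show ?case by (simp add: no_ascent_Suc)
qed (simp_all add: gapped_lists_le_1 no_ascent_def)

lemma last_mult_no_ascent: "1 \<le> q \<Longrightarrow> x q * no_ascent x q = (\<Prod>i\<in>{1..q}. x i)"
proof (induction q rule: nat_induct_at_least)
  case (Suc q)
  have "x (Suc q) * (1 + ascent x q) = x (Suc q) * x q"
    by (cases "x q"; cases "x (Suc q)") (simp_all add: ascent_def)
  then have "x (Suc q) * no_ascent x (Suc q) = x (Suc q) * (x q * no_ascent x q)"
    using Suc.hyps by (simp add: no_ascent_Suc ac_simps)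
  with Suc show ?case by simp
qed (simp add: no_ascent_def)

lemma no_ascent_Suc_mult_complement:
  "(1 + x (Suc q)) * no_ascent x (Suc q) = (1 + x (Suc q)) * no_ascent x q"
proof (cases "q = 0")
  case False
  have "(1 + x (Suc q)) * (1 + ascent x q) = 1 + x (Suc q)"
    by (cases "x (Suc q)") (simp_all add: ascent_def)
  then show ?thesis
    using False by (simp add: no_ascent_Suc mult.left_commute[of "1 + x (Suc q)"])
qed (simp add: no_ascent_def)

lemma a_cup_delta_eq_prod:
  "j < length s \<Longrightarrow> a_cup_delta a j s = a (s ! 0) * (\<Prod>r<j. a (s ! r) + a (s ! Suc r))"
proof (induction j arbitrary: s)
  case (Suc j)
  then have "a_cup_delta a j (take (Suc j) s) = a (s ! 0) * (\<Prod>r<j. a (s ! r) + a (s ! Suc r))"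
    by simp
  with Suc.prems show ?case by (simp add: cup_def delta0_def mult.assoc)
qed (simp add: cochain0_def)

fun delta_prod :: "bit \<Rightarrow> bit list \<Rightarrow> bit" where
  "delta_prod b [] = 1"
| "delta_prod b (y # ys) = (b + y) * delta_prod y ys"

lemma delta_prod_eq_prod: "delta_prod b ys = (\<Prod>r<length ys. (b # ys) ! r + (b # ys) ! Suc r)"
  by (induction ys arbitrary: b) (simp_all add: prod.lessThan_Suc_shift del: prod.lessThan_Suc)

lemma a_cup_delta_Cons:
  assumes "length u = j"
  shows "a_cup_delta a j (h # u) = a h * delta_prod (a h) (map a u)"
proof -
  have "(\<Prod>r<j. a ((h # u) ! r) + a ((h # u) ! Suc r)) = delta_prod (a h) (map a u)"
    unfolding delta_prod_eq_prod using assms by (intro prod.cong) (auto simp: nth_Cons')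
  with assms show ?thesis by (simp add: a_cup_delta_eq_prod)
qed

lemma mult_delta_prod: "b * delta_prod b ys = b * delta_prod 1 ys"
  by (cases b) simp_all

lemma delta_prod_pairs:
  "delta_prod 1 (concat (map (\<lambda>i. [x i, x (Suc i)]) is) @ rest)
   = (\<Prod>i\<leftarrow>is. ascent x i) * delta_prod 1 rest"
proof (induction "is")
  case (Cons i "is")
  have "delta_prod 1 (x i # x (Suc i) # ys) = ascent x i * delta_prod 1 ys" for ys
    by (cases "x i"; cases "x (Suc i)") (simp_all add: ascent_def)
  with Cons.IH show ?case by (simp add: mult.assoc)
qed simp

lemma length_idx_vertices:
  assumes "length is = p div 2"
  shows "length (idx_vertices p q is) = Suc p"
proof -
  have "length (concat (map (\<lambda>i. [i, Suc i]) is)) = 2 * length is"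
    by (induction "is") auto
  with assms show ?thesis by (simp add: idx_vertices_def)
qed

lemma a_cup_delta_face:
  assumes "length is = j div 2"
  shows "a_cup_delta a j (map ((!) t) (idx_vertices j q is))
       = a (t ! 0) * (\<Prod>i\<leftarrow>is. ascent (\<lambda>i. a (t ! i)) i) * (if even j then 1 else 1 + a (t ! q))"
proof -
  let ?x = "\<lambda>i. a (t ! i)"
  define vs where "vs = concat (map (\<lambda>i. [i, Suc i]) is) @ (if even j then [] else [q])"
  have "idx_vertices j q is = 0 # vs" and "length vs = j"
    using length_idx_vertices[OF assms, of q] by (simp_all add: idx_vertices_def vs_def)
  then have "a_cup_delta a j (map ((!) t) (idx_vertices j q is)) = ?x 0 * delta_prod 1 (map ?x vs)"
    by (simp add: a_cup_delta_Cons mult_delta_prod comp_def)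
  also have "map ?x vs = concat (map (\<lambda>i. [?x i, ?x (Suc i)]) is) @ (if even j then [] else [?x q])"
    by (simp add: vs_def map_concat comp_def)
  also have "delta_prod 1 \<dots> = (\<Prod>i\<leftarrow>is. ascent ?x i) * delta_prod 1 (if even j then [] else [?x q])"
    by (rule delta_prod_pairs)
  finally show ?thesis
    by (cases "even j") (simp_all add: mult.assoc)
qed

lemma a_cup_delta_even_face:
  "length is = k \<Longrightarrow> a_cup_delta a (2 * k) (map ((!) t) (idx_vertices (2 * k) q is))
     = a (t ! 0) * (\<Prod>i\<leftarrow>is. ascent (\<lambda>i. a (t ! i)) i)"
  using a_cup_delta_face[of "is" "2 * k" a t q] by simp

lemma a_cup_delta_odd_face:
  "length is = k \<Longrightarrow> a_cup_delta a (2 * k + 1) (map ((!) t) (idx_vertices (2 * k + 1) q is))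
     = a (t ! 0) * (1 + a (t ! q)) * (\<Prod>i\<leftarrow>is. ascent (\<lambda>i. a (t ! i)) i)"
  using a_cup_delta_face[of "is" "2 * k + 1" a t q] by (simp add: ac_simps)

lemma sorted_pairs_append:
  assumes "sorted_wrt (\<lambda>i j. i + 2 \<le> j) is" and "\<forall>i\<in>set is. \<forall>r\<in>set rest. Suc i < r"
    and "sorted_wrt (<) rest"
  shows "sorted_wrt (<) (concat (map (\<lambda>i. [i, Suc i]) is) @ rest)"
  using assms
proof (induction "is")
  case (Cons i "is")
  then show ?case by (fastforce simp: sorted_wrt_append)
qed simp

lemma sorted_idx_vertices:
  assumes "is \<in> idx_set j q" and "j \<le> q"
  shows "sorted_wrt (<) (idx_vertices j q is)"
proof -
  let ?vs = "concat (map (\<lambda>i. [i, Suc i]) is) @ (if even j then [] else [q])"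
  have "sorted_wrt (<) ?vs"
    by (rule sorted_pairs_append) (use assms in \<open>auto simp: idx_set_def\<close>)
  moreover have "\<forall>v\<in>set ?vs. 0 < v"
    using assms by (auto simp: idx_set_def dest: odd_pos)
  ultimately show ?thesis by (simp add: idx_vertices_def)
qed

lemma idx_vertices_le:
  "is \<in> idx_set j q \<Longrightarrow> v \<in> set (idx_vertices j q is) \<Longrightarrow> v \<le> q"
  unfolding idx_vertices_def idx_set_def by (auto split: if_splits)

lemma face_in_simplices:
  assumes K: "branched_complex K" and t: "t \<in> K" "length t = Suc q"
    and "is": "is \<in> idx_set j q" and "j \<le> q"
  shows "map ((!) t) (idx_vertices j q is) \<in> simplices K j"
proof -
  have len: "length (idx_vertices j q is) = Suc j"
    using "is" by (simp add: idx_set_def length_idx_vertices)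
  have "map ((!) t) (idx_vertices j q is) = nths t (set (idx_vertices j q is))"
    using sorted_idx_vertices[OF "is" \<open>j \<le> q\<close>] idx_vertices_le[OF "is"] t
    by (intro nths_eq_map_nth[symmetric]) (auto simp: less_Suc_eq_le)
  moreover have "map ((!) t) (idx_vertices j q is) \<noteq> []"
    using len by auto
  ultimately have "map ((!) t) (idx_vertices j q is) \<in> K"
    using K t unfolding branched_complex_def by metis
  with len show ?thesis by (simp add: simplices_def)
qed

lemma pairing_w_chain:
  assumes K: "branched_complex K"
  shows "pairing K j (w_chain K j) \<phi>
       = (\<Sum>t\<in>{t\<in>K. j < length t}. \<Sum>is\<in>idx_set j (length t - 1).
            \<phi> (map ((!) t) (idx_vertices j (length t - 1) is)))"
proof -
  have finK: "finite K" using K by (simp add: branched_complex_def)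
  then have fin: "finite (simplices K j)" "finite {t\<in>K. j < length t}"
    by (simp_all add: simplices_def)
  have "pairing K j (w_chain K j) \<phi>
      = (\<Sum>\<sigma>\<in>simplices K j. \<Sum>t\<in>{t\<in>K. j < length t}. \<Sum>is\<in>idx_set j (length t - 1).
           if map ((!) t) (idx_vertices j (length t - 1) is) = \<sigma> then \<phi> \<sigma> else 0)"
    unfolding pairing_def w_chain_def d_chain_def sum_distrib_right by (intro sum.cong refl) simp
  also have "\<dots> = (\<Sum>t\<in>{t\<in>K. j < length t}. \<Sum>is\<in>idx_set j (length t - 1). \<Sum>\<sigma>\<in>simplices K j.
           if map ((!) t) (idx_vertices j (length t - 1) is) = \<sigma> then \<phi> \<sigma> else 0)"
    by (subst sum.swap) (intro sum.cong refl sum.swap)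
  also have "\<dots> = (\<Sum>t\<in>{t\<in>K. j < length t}. \<Sum>is\<in>idx_set j (length t - 1).
            \<phi> (map ((!) t) (idx_vertices j (length t - 1) is)))"
  proof (intro sum.cong refl)
    fix t "is" assume "t \<in> {t\<in>K. j < length t}" and "is \<in> idx_set j (length t - 1)"
    then have "map ((!) t) (idx_vertices j (length t - 1) is) \<in> simplices K j"
      by (intro face_in_simplices[OF K]) auto
    with fin show "(\<Sum>\<sigma>\<in>simplices K j.
        if map ((!) t) (idx_vertices j (length t - 1) is) = \<sigma> then \<phi> \<sigma> else 0)
      = \<phi> (map ((!) t) (idx_vertices j (length t - 1) is))"
      by (simp add: sum.delta)
  qed
  finally show ?thesis .
qed

lemma prod_atMost_via_no_ascent:
  "x 0 * (no_ascent x q + (1 + x q) * no_ascent x (q - 1)) = (\<Prod>i\<le>q. x i)"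
proof (cases q)
  case 0
  then show ?thesis by (cases "x 0") (simp_all add: no_ascent_def)
next
  case (Suc p)
  have "no_ascent x q + (1 + x q) * no_ascent x (q - 1) = no_ascent x q + (1 + x q) * no_ascent x q"
    unfolding Suc by (simp only: diff_Suc_1 no_ascent_Suc_mult_complement)
  also have "\<dots> = x q * no_ascent x q"
    by (cases "x q") simp_all
  also have "\<dots> = (\<Prod>i\<in>{1..q}. x i)"
    using Suc by (simp add: last_mult_no_ascent)
  finally show ?thesis
    by (simp add: atMost_atLeast0 prod.atLeast_Suc_atMost)
qed

lemma idx_set_even: "idx_set (2 * k) q = {is \<in> gapped_lists q. length is = k}"
  unfolding idx_set_def gapped_lists_def by auto

lemma idx_set_odd: "idx_set (2 * k + 1) q = {is \<in> gapped_lists (q - 1). length is = k}"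
  unfolding idx_set_def gapped_lists_def by auto

lemma sum_gapped_lists_by_length:
  assumes "q < 2 * m"
  shows "(\<Sum>k<m. \<Sum>is\<in>{is \<in> gapped_lists q. length is = k}. f is) = (\<Sum>is\<in>gapped_lists q. f is)"
proof (rule sum.group)
  show "length ` gapped_lists q \<subseteq> {..<m}"
    using assms length_gapped_lists by fastforce
qed (simp_all add: finite_gapped_lists)

lemma sum_cup_faces_simplex:
  assumes "length t = Suc q"
  shows "(\<Sum>j<Suc q. \<Sum>is\<in>idx_set j q. a_cup_delta a j (map ((!) t) (idx_vertices j q is)))
       = (\<Prod>v\<leftarrow>t. a v)"
proof -
  let ?x = "\<lambda>i. a (t ! i)"
  let ?F = "\<lambda>j. \<Sum>is\<in>idx_set j q. a_cup_delta a j (map ((!) t) (idx_vertices j q is))"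
  let ?S = "\<lambda>q. \<Sum>is\<in>gapped_lists q. \<Prod>i\<leftarrow>is. ascent ?x i"
  have "(\<Sum>k<(Suc q + 1) div 2. ?F (2 * k))
      = (\<Sum>k<(Suc q + 1) div 2. \<Sum>is\<in>{is \<in> gapped_lists q. length is = k}.
           ?x 0 * (\<Prod>i\<leftarrow>is. ascent ?x i))"
    by (intro sum.cong refl) (simp_all add: idx_set_even a_cup_delta_even_face)
  also have "\<dots> = ?x 0 * ?S q"
    by (subst sum_gapped_lists_by_length) (simp_all add: sum_distrib_left)
  finally have even: "(\<Sum>k<(Suc q + 1) div 2. ?F (2 * k)) = ?x 0 * ?S q" .
  have odd: "(\<Sum>k<Suc q div 2. ?F (2 * k + 1)) = ?x 0 * (1 + ?x q) * ?S (q - 1)"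
  proof (cases q)
    case 0
    then show ?thesis by (cases "?x 0") (simp_all add: gapped_lists_le_1)
  next
    case (Suc p)
    have "(\<Sum>k<Suc q div 2. ?F (2 * k + 1))
        = (\<Sum>k<Suc q div 2. \<Sum>is\<in>{is \<in> gapped_lists (q - 1). length is = k}.
             ?x 0 * (1 + ?x q) * (\<Prod>i\<leftarrow>is. ascent ?x i))"
      by (intro sum.cong refl) (simp_all only: idx_set_odd a_cup_delta_odd_face mem_Collect_eq)
    also have "\<dots> = ?x 0 * (1 + ?x q) * ?S (q - 1)"
      using Suc by (subst sum_gapped_lists_by_length) (simp_all add: sum_distrib_left)
    finally show ?thesis .
  qed
  have "(\<Sum>j<Suc q. ?F j) = ?x 0 * (no_ascent ?x q + (1 + ?x q) * no_ascent ?x (q - 1))"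
    unfolding sum_lessThan_even_odd[of ?F] even odd sum_gapped_lists_eq_no_ascent
    by (simp add: ring_distribs mult.assoc)
  also have "\<dots> = (\<Prod>i\<le>q. ?x i)"
    by (rule prod_atMost_via_no_ascent)
  also have "\<dots> = (\<Prod>v\<leftarrow>t. a v)"
    using assms
    by (simp add: prod.list_conv_set_nth atLeast0LessThan lessThan_Suc_atMost del: prod.lessThan_Suc)
  finally show ?thesis .
qed

lemma sum_simplices_by_dimension:
  assumes "branched_complex K" and "\<forall>s\<in>K. length s \<le> Suc d"
  shows "(\<Sum>k=0..d. \<Sum>s\<in>simplices K k. f s) = (\<Sum>s\<in>K. f s)"
proof -
  have "simplices K k = {s \<in> K. length s - 1 = k}" for k
    using assms(1) by (auto simp: simplices_def branched_complex_def)
  moreover have "(\<lambda>s. length s - 1) ` K \<subseteq> {0..d}"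
    using assms(2) by force
  moreover have "finite K"
    using assms(1) by (simp add: branched_complex_def)
  ultimately show ?thesis
    by (simp add: sum.group)
qed

theorem proposition5:
  fixes K :: "'v list set" and d :: nat and a :: "'v \<Rightarrow> bit"
  assumes "branched_complex K"
    and "\<forall>s\<in>K. length s \<le> Suc d"
  shows "(\<Sum>k=0..d. \<Sum>s\<in>simplices K k. \<Prod>v\<leftarrow>s. a v)
       = (\<Sum>j=0..d. pairing K j (w_chain K j) (a_cup_delta a j))"
proof -
  let ?G = "\<lambda>j t. \<Sum>is\<in>idx_set j (length t - 1).
              a_cup_delta a j (map ((!) t) (idx_vertices j (length t - 1) is))"
  have finK: "finite K" and nonempty: "\<forall>s\<in>K. s \<noteq> []"
    using assms(1) by (simp_all add: branched_complex_def)
  have "(\<Sum>j=0..d. pairing K j (w_chain K j) (a_cup_delta a j))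
      = (\<Sum>j=0..d. \<Sum>t\<in>{t\<in>K. j < length t}. ?G j t)"
    by (simp add: pairing_w_chain[OF assms(1)])
  also have "\<dots> = (\<Sum>t\<in>K. \<Sum>j\<in>{j\<in>{0..d}. j < length t}. ?G j t)"
    using finK by (simp add: sum.swap_restrict)
  also have "\<dots> = (\<Sum>t\<in>K. \<Prod>v\<leftarrow>t. a v)"
  proof (rule sum.cong[OF refl])
    fix t assume "t \<in> K"
    then obtain q where q: "length t = Suc q"
      using nonempty by (cases t) auto
    moreover have "{j\<in>{0..d}. j < length t} = {..<Suc q}"
      using \<open>t \<in> K\<close> assms(2) q by auto
    ultimately show "(\<Sum>j\<in>{j\<in>{0..d}. j < length t}. ?G j t) = (\<Prod>v\<leftarrow>t. a v)"
      using sum_cup_faces_simplex[OF q] by simp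
  qed
  also have "\<dots> = (\<Sum>k=0..d. \<Sum>s\<in>simplices K k. \<Prod>v\<leftarrow>s. a v)"
    using assms by (rule sum_simplices_by_dimension[symmetric])
  finally show ?thesis ..
qed

end
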